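(* Let $X,Y$ be maximal consistent sets (relative to the axiom system of $\mathbb{PCL}$) and $A,B,C$ formulas. If $A\le_X B$, $B\le_X C$, $X^A\subseteq Y$ and $C\in Y$, then $X^B\subseteq Y$.
   Context: Formulas $\mathcal{L}::=p\mid\bot\mid A\wedge B\mid A\lor B\mid A\to B\mid A>B$. The axiom system of $\mathbb{PCL}$: classical propositional logic, rules (RCEA) from $A\leftrightarrow B$ infer $(A>C)\leftrightarrow(B>C)$, (RCK) from $A\to B$ infer $(C>A)\to(C>B)$, axioms (ID) $A>A$, (R-And) $(A>B)\wedge(A>C)\to(A>(B\wedge C))$, (CM) $(A>B)\wedge(A>C)\to((A\wedge B)>C)$, (OR) $(A>C)\wedge(B>C)\to((A\lor B)>C)$. For a maximal consistent set $X$: $X^B=\{D\mid B>D\in X\}$ and $A\le_X B$ iff $(A\lor B)>A\in X$. *)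

theory Defs
  imports Main
begin

datatype 'p fm =
    Atom 'p
  | Bot
  | Conj "'p fm" "'p fm"
  | Disj "'p fm" "'p fm"
  | Imp "'p fm" "'p fm"
  | Cond "'p fm" "'p fm"

definition Neg :: "'p fm \<Rightarrow> 'p fm" where "Neg A = Imp A Bot"
definition Iff :: "'p fm \<Rightarrow> 'p fm \<Rightarrow> 'p fm" where
  "Iff A B = Conj (Imp A B) (Imp B A)"

(* classical truth evaluation: conditionals A > B are treated as propositional atoms *)
fun peval :: "('p fm \<Rightarrow> bool) \<Rightarrow> 'p fm \<Rightarrow> bool" where
  "peval v (Atom p) = v (Atom p)"
| "peval v Bot = False"
| "peval v (Conj A B) = (peval v A \<and> peval v B)"
| "peval v (Disj A B) = (peval v A \<or> peval v B)"
| "peval v (Imp A B) = (peval v A \<longrightarrow> peval v B)"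
| "peval v (Cond A B) = v (Cond A B)"

definition tautology :: "'p fm \<Rightarrow> bool" where
  "tautology A \<longleftrightarrow> (\<forall>v. peval v A)"

inductive PCL :: "'p fm \<Rightarrow> bool" where
  Taut: "tautology A \<Longrightarrow> PCL A"
| MP: "PCL (Imp A B) \<Longrightarrow> PCL A \<Longrightarrow> PCL B"
| RCEA: "PCL (Iff A B) \<Longrightarrow> PCL (Iff (Cond A C) (Cond B C))"
| RCK: "PCL (Imp A B) \<Longrightarrow> PCL (Imp (Cond C A) (Cond C B))"
| ID: "PCL (Cond A A)"
| RAnd: "PCL (Imp (Conj (Cond A B) (Cond A C)) (Cond A (Conj B C)))"
| CM: "PCL (Imp (Conj (Cond A B) (Cond A C)) (Cond (Conj A B) C))"
| OR: "PCL (Imp (Conj (Cond A C) (Cond B C)) (Cond (Disj A B) C))"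

definition derives :: "'p fm set \<Rightarrow> 'p fm \<Rightarrow> bool" where
  "derives \<Gamma> A \<longleftrightarrow> (\<exists>xs. set xs \<subseteq> \<Gamma> \<and> PCL (foldr Imp xs A))"

definition consistent :: "'p fm set \<Rightarrow> bool" where
  "consistent \<Gamma> \<longleftrightarrow> \<not> derives \<Gamma> Bot"

definition maximal_consistent :: "'p fm set \<Rightarrow> bool" where
  "maximal_consistent X \<longleftrightarrow> consistent X \<and> (\<forall>A. A \<notin> X \<longrightarrow> \<not> consistent (insert A X))"

definition cond_set :: "'p fm set \<Rightarrow> 'p fm \<Rightarrow> 'p fm set" where
  "cond_set X B = {D. Cond B D \<in> X}"

definition pref_le :: "'p fm set \<Rightarrow> 'p fm \<Rightarrow> 'p fm \<Rightarrow> bool" where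
  "pref_le X A B \<longleftrightarrow> Cond (Disj A B) A \<in> X"

end

theory Submission
  imports Defs
begin

text \<open>
  Put \<open>E = A \<or> B \<or> C\<close>. Cumulativity and cut turn the two hypotheses
  \<open>(A \<or> B) > A\<close> and \<open>(B \<or> C) > B\<close> into \<open>E > A\<close>. The derived rule
  "from \<open>P > Q\<close> infer \<open>E > (P \<rightarrow> Q)\<close> whenever \<open>P\<close> implies \<open>E\<close>" applied to
  \<open>(B \<or> C) > B\<close> and \<open>B > D\<close> gives \<open>E > (C \<rightarrow> D)\<close>, and since \<open>E > A\<close>
  this restricts to \<open>A > (C \<rightarrow> D)\<close>. Hence \<open>C \<rightarrow> D \<in> Y\<close>, and with
  \<open>C \<in> Y\<close> also \<open>D \<in> Y\<close>.
\<close>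

lemma peval_foldr_Imp:
  "peval v (foldr Imp xs C) \<longleftrightarrow> ((\<forall>x\<in>set xs. peval v x) \<longrightarrow> peval v C)"
  by (induction xs) auto

lemma derives_mp:
  assumes "derives G (Imp A B)" and "derives G A"
  shows "derives G B"
proof -
  obtain xs where xs: "set xs \<subseteq> G" "PCL (foldr Imp xs (Imp A B))"
    using assms(1) derives_def by blast
  obtain ys where ys: "set ys \<subseteq> G" "PCL (foldr Imp ys A)"
    using assms(2) derives_def by blast
  have "tautology (Imp (foldr Imp xs (Imp A B)) (Imp (foldr Imp ys A) (foldr Imp (xs @ ys) B)))"
    unfolding tautology_def by (auto simp: peval_foldr_Imp)
  then have "PCL (foldr Imp (xs @ ys) B)"
    using PCL.MP PCL.Taut xs(2) ys(2) by blast
  then show ?thesis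
    unfolding derives_def using xs ys by (intro exI[of _ "xs @ ys"]) auto
qed

lemma derives_mem: "A \<in> G \<Longrightarrow> derives G A"
  unfolding derives_def by (intro exI[of _ "[A]"]) (auto intro!: PCL.Taut simp: tautology_def)

lemma derives_PCL: "PCL A \<Longrightarrow> derives G A"
  unfolding derives_def by (intro exI[of _ "[]"]) auto

lemma derives_deduction:
  assumes "derives (insert A G) B"
  shows "derives G (Imp A B)"
proof -
  obtain xs where xs: "set xs \<subseteq> insert A G" "PCL (foldr Imp xs B)"
    using assms derives_def by blast
  let ?ys = "filter (\<lambda>x. x \<noteq> A) xs"
  have "tautology (Imp (foldr Imp xs B) (foldr Imp ?ys (Imp A B)))"
    unfolding tautology_def by (auto simp: peval_foldr_Imp)
  then have "PCL (foldr Imp ?ys (Imp A B))"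
    using PCL.MP PCL.Taut xs(2) by blast
  then show ?thesis
    unfolding derives_def using xs by (intro exI[of _ ?ys]) auto
qed

lemma mc_derives_mem:
  assumes X: "maximal_consistent X" and "derives X A"
  shows "A \<in> X"
proof (rule ccontr)
  assume "A \<notin> X"
  then have "derives (insert A X) Bot"
    using X unfolding maximal_consistent_def consistent_def by blast
  then have "derives X Bot"
    using derives_deduction derives_mp assms(2) by blast
  then show False
    using X unfolding maximal_consistent_def consistent_def by blast
qed

lemma mc_mp: "maximal_consistent X \<Longrightarrow> Imp A B \<in> X \<Longrightarrow> A \<in> X \<Longrightarrow> B \<in> X"
  by (meson derives_mem derives_mp mc_derives_mem)

lemma mc_PCL: "maximal_consistent X \<Longrightarrow> PCL A \<Longrightarrow> A \<in> X"
  by (simp add: derives_PCL mc_derives_mem)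

lemma mc_tautology_mp2:
  assumes "maximal_consistent X" and "tautology (Imp P (Imp Q R))" and "P \<in> X" and "Q \<in> X"
  shows "R \<in> X"
  using assms by (meson PCL.Taut mc_mp mc_PCL)

lemma mc_Conj: "maximal_consistent X \<Longrightarrow> P \<in> X \<Longrightarrow> Q \<in> X \<Longrightarrow> Conj P Q \<in> X"
  by (rule mc_tautology_mp2[of X P Q]) (simp_all add: tautology_def)

lemma mc_RCEA:
  assumes X: "maximal_consistent X" and "tautology (Iff A B)" and "Cond A C \<in> X"
  shows "Cond B C \<in> X"
proof -
  have "Iff (Cond A C) (Cond B C) \<in> X"
    using PCL.RCEA PCL.Taut assms(2) mc_PCL[OF X] by blast
  moreover have "tautology (Imp (Iff (Cond A C) (Cond B C)) (Imp (Cond A C) (Cond B C)))"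
    by (simp add: tautology_def Iff_def)
  ultimately show ?thesis
    using mc_tautology_mp2[OF X] assms(3) by blast
qed

lemma mc_RW:
  assumes X: "maximal_consistent X" and "tautology (Imp B C)" and "Cond A B \<in> X"
  shows "Cond A C \<in> X"
  using PCL.RCK PCL.Taut assms(2,3) mc_PCL[OF X] mc_mp[OF X] by blast

lemma mc_ID: "maximal_consistent X \<Longrightarrow> Cond A A \<in> X"
  using PCL.ID mc_PCL by blast

lemma mc_RAnd:
  "maximal_consistent X \<Longrightarrow> Cond A B \<in> X \<Longrightarrow> Cond A C \<in> X \<Longrightarrow> Cond A (Conj B C) \<in> X"
  by (meson PCL.RAnd mc_Conj mc_mp mc_PCL)

lemma mc_CM:
  "maximal_consistent X \<Longrightarrow> Cond A B \<in> X \<Longrightarrow> Cond A C \<in> X \<Longrightarrow> Cond (Conj A B) C \<in> X"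
  by (meson PCL.CM mc_Conj mc_mp mc_PCL)

lemma mc_OR:
  "maximal_consistent X \<Longrightarrow> Cond A C \<in> X \<Longrightarrow> Cond B C \<in> X \<Longrightarrow> Cond (Disj A B) C \<in> X"
  by (meson PCL.OR mc_Conj mc_mp mc_PCL)

lemma mc_Cond_Imp_weaker_antecedent:
  assumes X: "maximal_consistent X" and "Cond P Q \<in> X" and "tautology (Imp P E)"
  shows "Cond E (Imp P Q) \<in> X"
proof -
  have "Cond P (Imp P Q) \<in> X"
    by (rule mc_RW[OF X _ assms(2)]) (auto simp: tautology_def)
  moreover have "Cond (Conj E (Neg P)) (Imp P Q) \<in> X"
    by (rule mc_RW[OF X _ mc_ID[OF X]]) (auto simp: tautology_def Neg_def)
  ultimately have "Cond (Disj P (Conj E (Neg P))) (Imp P Q) \<in> X"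
    by (rule mc_OR[OF X])
  then show ?thesis
    by (rule mc_RCEA[OF X, rotated]) (use assms(3) in \<open>auto simp: tautology_def Neg_def Iff_def\<close>)
qed

lemma mc_Cut:
  assumes X: "maximal_consistent X" and "Cond P Q \<in> X" and "Cond (Conj P Q) R \<in> X"
  shows "Cond P R \<in> X"
proof -
  have "Cond P (Imp (Conj P Q) R) \<in> X"
    by (rule mc_Cond_Imp_weaker_antecedent[OF X assms(3)]) (auto simp: tautology_def)
  then have "Cond P (Conj P (Conj Q (Imp (Conj P Q) R))) \<in> X"
    by (intro mc_RAnd[OF X] mc_ID[OF X] assms(2))
  then show ?thesis
    by (rule mc_RW[OF X, rotated]) (auto simp: tautology_def)
qed

lemma mc_Cond_restrict:
  assumes X: "maximal_consistent X" and "Cond E P \<in> X" and "Cond E R \<in> X"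
    and "tautology (Imp P E)"
  shows "Cond P R \<in> X"
proof -
  have "Cond (Conj E P) R \<in> X"
    by (rule mc_CM[OF X assms(2,3)])
  then show ?thesis
    by (rule mc_RCEA[OF X, rotated]) (use assms(4) in \<open>auto simp: tautology_def Iff_def\<close>)
qed

lemma pref_le_chain_Cond:
  assumes X: "maximal_consistent X" and "pref_le X A B" and "pref_le X B C"
  shows "Cond (Disj A (Disj B C)) A \<in> X"
proof -
  let ?E = "Disj A (Disj B C)"
  have AB: "Cond (Disj A B) A \<in> X" and BC: "Cond (Disj B C) B \<in> X"
    using assms(2,3) by (simp_all add: pref_le_def)
  have "Cond (Disj B C) (Disj A B) \<in> X"
    by (rule mc_RW[OF X _ BC]) (auto simp: tautology_def)
  then have "Cond (Disj (Disj A B) (Disj B C)) (Disj A B) \<in> X"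
    by (rule mc_OR[OF X mc_ID[OF X]])
  then have "Cond ?E (Disj A B) \<in> X"
    by (rule mc_RCEA[OF X, rotated]) (auto simp: tautology_def Iff_def)
  moreover have "Cond (Conj ?E (Disj A B)) A \<in> X"
    by (rule mc_RCEA[OF X _ AB]) (auto simp: tautology_def Iff_def)
  ultimately show ?thesis
    by (rule mc_Cut[OF X])
qed

lemma pref_le_chain_Cond_Imp:
  assumes X: "maximal_consistent X" and "pref_le X A B" and "pref_le X B C"
    and "Cond B D \<in> X"
  shows "Cond A (Imp C D) \<in> X"
proof -
  let ?E = "Disj A (Disj B C)"
  have "Cond (Disj B C) B \<in> X"
    using assms(3) by (simp add: pref_le_def)
  then have "Cond ?E (Imp (Disj B C) B) \<in> X"
    by (rule mc_Cond_Imp_weaker_antecedent[OF X]) (auto simp: tautology_def)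
  moreover have "Cond ?E (Imp B D) \<in> X"
    by (rule mc_Cond_Imp_weaker_antecedent[OF X assms(4)]) (auto simp: tautology_def)
  ultimately have "Cond ?E (Conj (Imp (Disj B C) B) (Imp B D)) \<in> X"
    by (rule mc_RAnd[OF X])
  then have "Cond ?E (Imp C D) \<in> X"
    by (rule mc_RW[OF X, rotated]) (auto simp: tautology_def)
  then show ?thesis
    by (rule mc_Cond_restrict[OF X pref_le_chain_Cond[OF assms(1-3)]]) (auto simp: tautology_def)
qed

theorem mainTheorem6:
  fixes X Y :: "'p fm set" and A B C :: "'p fm"
  assumes "maximal_consistent X" and "maximal_consistent Y"
    and "pref_le X A B" and "pref_le X B C"
    and "cond_set X A \<subseteq> Y" and "C \<in> Y"
  shows "cond_set X B \<subseteq> Y"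
proof
  fix D
  assume "D \<in> cond_set X B"
  then have "Cond A (Imp C D) \<in> X"
    using pref_le_chain_Cond_Imp assms(1,3,4) by (simp add: cond_set_def)
  then have "Imp C D \<in> Y"
    using assms(5) by (auto simp: cond_set_def)
  then show "D \<in> Y"
    using mc_mp[OF assms(2)] assms(6) by blast
qed

end
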